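(* Let $k,g,r_0$ be positive integers with $k\mid r_0$. For every DAG $G$ (for which the quantities are finite), $\mathrm{OPT}^{(k)}/\mathrm{OPT}^{(1)}\ge 1/k$, where $\mathrm{OPT}^{(1)}$ is the MPP optimum of $G$ with $1$ processor and fast memory $r=r_0$, and $\mathrm{OPT}^{(k)}$ is the MPP optimum of $G$ with $k$ processors and fast memory $r=r_0/k$ each (same $g$). Moreover, whenever $r_0/k\ge 2$, there exist DAGs for which $\mathrm{OPT}^{(k)}/\mathrm{OPT}^{(1)}=1/k$.
   Context: Multiprocessor red-blue pebbling (MPP). Input: a DAG $G=(V,E)$ with $n=|V|$ and positive integers $k$ (number of processors), $r$ (fast-memory size per processor), $g$ (cost of an I/O step). $\Delta_{in}$ denotes the maximum in-degree of $G$; sources/sinks are nodes of in-degree/out-degree $0$. A configuration is a tuple $(R^1,\dots,R^k,B)$ of subsets of $V$ ($R^j$ = nodes carrying a red pebble of processor $j$, $B$ = nodes carrying a blue pebble); it is valid if $|R^j|\le r$ for all $j$. The initial configuration has all sets empty; a configuration is terminal if every sink lies in $B\cup\bigcup_j R^j$. The transition rules are: (R1) for some $m\le k$, pairwise distinct processors $j_1,\dots,j_m$ and nodes $v_1,\dots,v_m$ with $v_i\in R^{j_i}$, add each $v_i$ to $B$ (cost $g$); (R2) for some $m\le k$, pairwise distinct processors $j_1,\dots,j_m$ and nodes $v_1,\dots,v_m\in B$, add each $v_i$ to $R^{j_i}$ (cost $g$); (R3) for some $m\le k$, pairwise distinct processors $j_1,\dots,j_m$ and nodes $v_1,\dots,v_m$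 such that every in-neighbor of $v_i$ lies in $R^{j_i}$, add each $v_i$ to $R^{j_i}$ (cost $1$); (R4) remove a single red or blue pebble (cost $0$). A pebbling strategy is a sequence of valid configurations starting at the initial configuration and ending at a terminal one, each obtained from its predecessor by one rule; its cost is the sum of the costs of the rules applied. $\mathrm{OPT}$ denotes the minimum cost of a pebbling strategy. Applications of (R1),(R2) are called I/O steps and applications of (R3) compute steps. *)

theory Defs
  imports Complex_Main
begin

text \<open>A DAG is given by a finite vertex set V and an edge set E (pairs (u,v) meaning u -> v).  A configuration is a pair (R, B) where R j is the
  set of nodes carrying a red pebble of processor j and B the set of blue-pebbled nodes.\<close>

definition dag :: "'a set \<Rightarrow> ('a \<times> 'a) set \<Rightarrow> bool" where
  "dag V E \<longleftrightarrow> finite V \<and> E \<subseteq> V \<times> V \<and> acyclic E"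

definition is_sink :: "'a set \<Rightarrow> ('a \<times> 'a) set \<Rightarrow> 'a \<Rightarrow> bool" where
  "is_sink V E v \<longleftrightarrow> v \<in> V \<and> (\<forall>w. (v, w) \<notin> E)"

type_synonym 'a conf = "(nat \<Rightarrow> 'a set) \<times> 'a set"

definition init_conf :: "'a conf" where
  "init_conf = (\<lambda>_. {}, {})"

definition valid_conf :: "nat \<Rightarrow> nat \<Rightarrow> 'a conf \<Rightarrow> bool" where
  "valid_conf k r c \<longleftrightarrow> (\<forall>j<k. card (fst c j) \<le> r)"

definition terminal_conf :: "'a set \<Rightarrow> ('a \<times> 'a) set \<Rightarrow> nat \<Rightarrow> 'a conf \<Rightarrow> bool" where
  "terminal_conf V E k c \<longleftrightarrow>
     (\<forall>v. is_sink V E v \<longrightarrow> v \<in> snd c \<union> (\<Union>j<k. fst c j))"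

text \<open>One transition, labelled with its cost. The set J is the set of (pairwise distinct)
  processors taking part (so m = card J, 1 <= m <= k), and v j is the node handled by processor j.\<close>

inductive mpp_step :: "'a set \<Rightarrow> ('a \<times> 'a) set \<Rightarrow> nat \<Rightarrow> nat \<Rightarrow> 'a conf \<Rightarrow> 'a conf \<Rightarrow> nat \<Rightarrow> bool"
  for V :: "'a set" and E :: "('a \<times> 'a) set" and k :: nat and g :: nat where
  R1: "\<lbrakk>J \<subseteq> {..<k}; J \<noteq> {}; \<forall>j\<in>J. v j \<in> R j\<rbrakk>
       \<Longrightarrow> mpp_step V E k g (R, B) (R, B \<union> v ` J) g"
| R2: "\<lbrakk>J \<subseteq> {..<k}; J \<noteq> {}; \<forall>j\<in>J. v j \<in> B\<rbrakk>
       \<Longrightarrow> mpp_step V E k g (R, B) (\<lambda>j. if j \<in> J then insert (v j) (R j) else R j, B) g"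
| R3: "\<lbrakk>J \<subseteq> {..<k}; J \<noteq> {}; \<forall>j\<in>J. v j \<in> V \<and> (\<forall>u. (u, v j) \<in> E \<longrightarrow> u \<in> R j)\<rbrakk>
       \<Longrightarrow> mpp_step V E k g (R, B) (\<lambda>j. if j \<in> J then insert (v j) (R j) else R j, B) 1"
| R4_red: "\<lbrakk>j < k; x \<in> R j\<rbrakk> \<Longrightarrow> mpp_step V E k g (R, B) (R(j := R j - {x}), B) 0"
| R4_blue: "x \<in> B \<Longrightarrow> mpp_step V E k g (R, B) (R, B - {x}) 0"

definition is_strategy :: "'a set \<Rightarrow> ('a \<times> 'a) set \<Rightarrow> nat \<Rightarrow> nat \<Rightarrow> nat \<Rightarrow>
    'a conf list \<Rightarrow> nat list \<Rightarrow> bool" where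
  "is_strategy V E k r g cs ws \<longleftrightarrow>
     cs \<noteq> [] \<and> hd cs = init_conf \<and> length cs = Suc (length ws) \<and>
     (\<forall>i < length ws. mpp_step V E k g (cs ! i) (cs ! Suc i) (ws ! i)) \<and>
     (\<forall>c \<in> set cs. valid_conf k r c) \<and> terminal_conf V E k (last cs)"

definition pebblable :: "'a set \<Rightarrow> ('a \<times> 'a) set \<Rightarrow> nat \<Rightarrow> nat \<Rightarrow> nat \<Rightarrow> bool" where
  "pebblable V E k r g \<longleftrightarrow> (\<exists>cs ws. is_strategy V E k r g cs ws)"

definition OPT :: "'a set \<Rightarrow> ('a \<times> 'a) set \<Rightarrow> nat \<Rightarrow> nat \<Rightarrow> nat \<Rightarrow> nat" where
  "OPT V E k r g = (LEAST c. \<exists>cs ws. is_strategy V E k r g cs ws \<and> sum_list ws = c)"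

end

theory Submission
  imports Defs
begin

text \<open>A single processor whose fast memory is the sum of the memories of k processors can
  simulate them: it keeps the union of their red sets and replaces each parallel step, which
  handles at most k nodes, by at most k sequential steps of the same kind; hence
  OPT(1) is at most k times OPT(k). The bound is attained by k isolated nodes: every strategy
  must pebble each sink, and a step of cost w creates at most k * w new pebbled nodes, so one
  processor needs k compute steps while k processors need only one.\<close>

inductive mpp_run :: "'a set \<Rightarrow> ('a \<times> 'a) set \<Rightarrow> nat \<Rightarrow> nat \<Rightarrow> nat \<Rightarrow> 'a conf \<Rightarrow> 'a conf \<Rightarrow> nat \<Rightarrow> bool"
  for V E k r g where
  run_nil: "valid_conf k r c \<Longrightarrow> mpp_run V E k r g c c 0"
| run_step: "\<lbrakk>valid_conf k r c; mpp_step V E k g c c' w; mpp_run V E k r g c' c'' w'\<rbrakk>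
             \<Longrightarrow> mpp_run V E k r g c c'' (w + w')"

lemma mpp_run_valid:
  "mpp_run V E k r g c c' w \<Longrightarrow> valid_conf k r c \<and> valid_conf k r c'"
  by (induction rule: mpp_run.induct) auto

lemma mpp_run_trans:
  "mpp_run V E k r g c c' w \<Longrightarrow> mpp_run V E k r g c' c'' w' \<Longrightarrow> mpp_run V E k r g c c'' (w + w')"
proof (induction rule: mpp_run.induct)
  case (run_step c c' w c'' w0)
  then show ?case by (metis add.assoc mpp_run.run_step)
qed simp

lemma mpp_run_single:
  "valid_conf k r c \<Longrightarrow> mpp_step V E k g c c' w \<Longrightarrow> valid_conf k r c' \<Longrightarrow> mpp_run V E k r g c c' w"
  using run_step[OF _ _ run_nil] by fastforce

lemma mpp_run_snoc:
  "mpp_run V E k r g c c' w \<Longrightarrow> mpp_step V E k g c' c'' w' \<Longrightarrow> valid_conf k r c''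
   \<Longrightarrow> mpp_run V E k r g c c'' (w + w')"
  by (metis mpp_run_trans mpp_run_single mpp_run_valid)

lemma mpp_run_iff_steps:
  "mpp_run V E k r g c c' w \<longleftrightarrow>
   (\<exists>cs ws. cs \<noteq> [] \<and> hd cs = c \<and> last cs = c' \<and> length cs = Suc (length ws) \<and>
      (\<forall>i < length ws. mpp_step V E k g (cs ! i) (cs ! Suc i) (ws ! i)) \<and>
      (\<forall>x \<in> set cs. valid_conf k r x) \<and> sum_list ws = w)"
  (is "?run \<longleftrightarrow> ?steps")
proof
  assume ?run then show ?steps
  proof (induction rule: mpp_run.induct)
    case (run_nil c)
    show ?case by (intro exI[of _ "[c]"] exI[of _ "[]"]) (simp add: run_nil)
  next
    case (run_step c c' w c'' w')
    then obtain cs ws where cs: "cs \<noteq> []" "hd cs = c'" "last cs = c''" "length cs = Suc (length ws)"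
      "\<forall>i < length ws. mpp_step V E k g (cs ! i) (cs ! Suc i) (ws ! i)"
      "\<forall>x \<in> set cs. valid_conf k r x" "sum_list ws = w'" by blast
    have "\<forall>i < length (w # ws). mpp_step V E k g ((c # cs) ! i) ((c # cs) ! Suc i) ((w # ws) ! i)"
      using cs run_step.hyps(2) by (auto simp: hd_conv_nth nth_Cons split: nat.split)
    then show ?case using cs run_step.hyps(1)
      by (intro exI[of _ "c # cs"] exI[of _ "w # ws"]) auto
  qed
next
  assume ?steps
  then obtain cs ws where "cs \<noteq> []" "hd cs = c" "last cs = c'" "length cs = Suc (length ws)"
    "\<forall>i < length ws. mpp_step V E k g (cs ! i) (cs ! Suc i) (ws ! i)"
    "\<forall>x \<in> set cs. valid_conf k r x" "sum_list ws = w" by blast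
  then show ?run
  proof (induction ws arbitrary: cs c w)
    case Nil
    then show ?case by (cases cs) (auto intro: run_nil)
  next
    case (Cons w0 ws)
    obtain c0 cs' where cs: "cs = c0 # cs'" using Cons.prems(1) by (cases cs) auto
    have c0: "c0 = c" and ne: "cs' \<noteq> []" using Cons.prems(2,4) cs by auto
    have steps: "\<forall>i < length ws. mpp_step V E k g (cs' ! i) (cs' ! Suc i) (ws ! i)"
      using Cons.prems(5) cs by auto
    have "mpp_run V E k r g (hd cs') c' (sum_list ws)"
      using Cons.prems(3,4,6) cs ne steps by (intro Cons.IH) auto
    moreover have "mpp_step V E k g c (hd cs') w0"
      using Cons.prems(5) cs c0 ne by (auto simp: hd_conv_nth)
    ultimately show ?case using Cons.prems(6,7) cs c0 by (auto intro: run_step)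
  qed
qed

lemma strategy_iff_run:
  "(\<exists>cs ws. is_strategy V E k r g cs ws \<and> sum_list ws = w) \<longleftrightarrow>
   (\<exists>c. mpp_run V E k r g init_conf c w \<and> terminal_conf V E k c)"
  unfolding is_strategy_def mpp_run_iff_steps by blast

lemma OPT_le_run:
  assumes "mpp_run V E k r g init_conf c w" and "terminal_conf V E k c"
  shows "pebblable V E k r g" and "OPT V E k r g \<le> w"
proof -
  obtain cs ws where "is_strategy V E k r g cs ws" "sum_list ws = w"
    using assms strategy_iff_run by blast
  then show "pebblable V E k r g" and "OPT V E k r g \<le> w"
    unfolding pebblable_def OPT_def by (blast, blast intro: Least_le)
qed

lemma OPT_run:
  assumes "pebblable V E k r g"
  obtains c where "mpp_run V E k r g init_conf c (OPT V E k r g)" and "terminal_conf V E k c"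
proof -
  have "\<exists>cs ws. is_strategy V E k r g cs ws \<and> sum_list ws = OPT V E k r g"
    unfolding OPT_def by (rule LeastI_ex) (use assms in \<open>auto simp: pebblable_def\<close>)
  then show ?thesis using that strategy_iff_run by blast
qed

definition solo_conf :: "'a set \<Rightarrow> 'a set \<Rightarrow> 'a conf" where
  "solo_conf X B = (\<lambda>j. if j = 0 then X else {}, B)"

definition red_nodes :: "nat \<Rightarrow> 'a conf \<Rightarrow> 'a set" where
  "red_nodes k c = (\<Union>j<k. fst c j)"

definition merge_conf :: "nat \<Rightarrow> 'a conf \<Rightarrow> 'a conf" where
  "merge_conf k c = solo_conf (red_nodes k c) (snd c)"

text \<open>Validity only bounds cardinalities, which are 0 for infinite sets; the simulation below
  needs the (reachable, hence finite) configurations to be finite.\<close>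

definition finite_conf :: "'a conf \<Rightarrow> bool" where
  "finite_conf c \<longleftrightarrow> (\<forall>j. finite (fst c j)) \<and> finite (snd c)"

lemma valid_solo_conf_iff: "valid_conf (Suc 0) r (solo_conf X B) \<longleftrightarrow> card X \<le> r"
  by (simp add: valid_conf_def solo_conf_def)

lemma solo_conf_insert:
  "(\<lambda>j. if j \<in> {0} then insert x (fst (solo_conf X B) j) else fst (solo_conf X B) j, B)
   = solo_conf (insert x X) B"
  by (auto simp: solo_conf_def fun_eq_iff)

lemma valid_merge_conf: "valid_conf k r c \<Longrightarrow> valid_conf 1 (k * r) (merge_conf k c)"
proof -
  assume valid: "valid_conf k r c"
  have "card (red_nodes k c) \<le> (\<Sum>j<k. card (fst c j))"
    unfolding red_nodes_def by (rule card_UN_le) simp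
  also have "\<dots> \<le> k * r"
    using sum_bounded_above[of "{..<k}" "\<lambda>j. card (fst c j)" r] valid
    by (simp add: valid_conf_def)
  finally show ?thesis by (simp add: merge_conf_def valid_solo_conf_iff)
qed

lemma finite_red_nodes: "finite_conf c \<Longrightarrow> finite (red_nodes k c)"
  by (simp add: finite_conf_def red_nodes_def)

lemma mpp_step_finite_conf: "mpp_step V E k g c c' w \<Longrightarrow> finite_conf c \<Longrightarrow> finite_conf c'"
proof (induction rule: mpp_step.induct)
  case (R1 J v R B)
  then have "finite (v ` J)" using finite_subset[OF _ finite_lessThan] by blast
  with R1 show ?case by (simp add: finite_conf_def)
qed (auto simp: finite_conf_def)

lemma card_image_lessThan_le: "J \<subseteq> {..<k} \<Longrightarrow> card (v ` J) \<le> k"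
  by (metis card_image_le card_lessThan card_mono finite_lessThan finite_subset order_trans)

lemma run_solo_store:
  assumes "finite A" and "A \<subseteq> X" and "card X \<le> r"
  shows "mpp_run V E 1 r g (solo_conf X B) (solo_conf X (B \<union> A)) (card A * g)"
  using assms(1,2)
proof (induction A rule: finite_induct)
  case empty
  then show ?case using assms(3) by (simp add: run_nil valid_solo_conf_iff)
next
  case (insert x A)
  have "mpp_step V E 1 g (solo_conf X (B \<union> A)) (solo_conf X (B \<union> A \<union> (\<lambda>_. x) ` {0::nat})) g"
    unfolding solo_conf_def by (rule R1[where v = "\<lambda>_. x"]) (use insert in auto)
  then have "mpp_run V E 1 r g (solo_conf X B) (solo_conf X (B \<union> A \<union> {x})) (card A * g + g)"
    using insert assms(3) by (intro mpp_run_snoc) (auto simp: valid_solo_conf_iff)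
  then show ?case using insert by (simp add: add.commute insert_commute)
qed

lemma run_solo_add_red:
  assumes "finite A" and "finite (X \<union> A)" and "card (X \<union> A) \<le> r"
    and step: "\<And>x Y. x \<in> A \<Longrightarrow> X \<subseteq> Y \<Longrightarrow> mpp_step V E 1 g (solo_conf Y B) (solo_conf (insert x Y) B) w"
  shows "mpp_run V E 1 r g (solo_conf X B) (solo_conf (X \<union> A) B) (card A * w)"
  using assms(1-3) step
proof (induction A rule: finite_induct)
  case empty
  then show ?case by (simp add: run_nil valid_solo_conf_iff)
next
  case (insert x A)
  have "card (X \<union> A) \<le> card (X \<union> insert x A)"
    using insert.prems(1) by (intro card_mono) auto
  then have "mpp_run V E 1 r g (solo_conf X B) (solo_conf (X \<union> A) B) (card A * w)"
    using insert by simp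
  then have "mpp_run V E 1 r g (solo_conf X B) (solo_conf (insert x (X \<union> A)) B) (card A * w + w)"
    using insert by (intro mpp_run_snoc) (auto simp: valid_solo_conf_iff)
  then show ?case using insert by (simp add: add.commute)
qed

lemma mpp_step_solo_load:
  assumes "x \<in> B"
  shows "mpp_step V E 1 g (solo_conf Y B) (solo_conf (insert x Y) B) g"
proof -
  have "mpp_step V E 1 g (fst (solo_conf Y B), B)
     (\<lambda>j. if j \<in> {0} then insert x (fst (solo_conf Y B) j) else fst (solo_conf Y B) j, B) g"
    by (rule R2[where v = "\<lambda>_. x"]) (use assms in auto)
  moreover have "(fst (solo_conf Y B), B) = solo_conf Y B" by (simp add: solo_conf_def)
  ultimately show ?thesis by (simp only: solo_conf_insert)
qed

lemma mpp_step_solo_compute: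
  assumes "x \<in> V" and "\<forall>u. (u, x) \<in> E \<longrightarrow> u \<in> Y"
  shows "mpp_step V E 1 g (solo_conf Y B) (solo_conf (insert x Y) B) 1"
proof -
  have "mpp_step V E 1 g (fst (solo_conf Y B), B)
     (\<lambda>j. if j \<in> {0} then insert x (fst (solo_conf Y B) j) else fst (solo_conf Y B) j, B) 1"
    by (rule R3[where v = "\<lambda>_. x"]) (use assms in \<open>auto simp: solo_conf_def\<close>)
  moreover have "(fst (solo_conf Y B), B) = solo_conf Y B" by (simp add: solo_conf_def)
  ultimately show ?thesis by (simp only: solo_conf_insert)
qed

lemma mpp_step_solo_discard:
  assumes "x \<in> X"
  shows "mpp_step V E 1 g (solo_conf X B) (solo_conf (X - {x}) B) 0"
proof -
  define R where "R = fst (solo_conf X B)"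
  have "mpp_step V E 1 g (R, B) (R(0 := R 0 - {x}), B) 0"
    by (rule R4_red) (use assms in \<open>auto simp: R_def solo_conf_def\<close>)
  moreover have "(R, B) = solo_conf X B" and "(R(0 := R 0 - {x}), B) = solo_conf (X - {x}) B"
    by (auto simp: R_def solo_conf_def fun_eq_iff)
  ultimately show ?thesis by simp
qed

lemma run_merge_add_red:
  assumes red': "red_nodes k c' = red_nodes k c \<union> v ` J" and "J \<subseteq> {..<k}" and "snd c' = snd c"
    and valid': "valid_conf k r c'" and fin': "finite_conf c'"
    and step: "\<And>x Y. x \<in> v ` J \<Longrightarrow> red_nodes k c \<subseteq> Y
      \<Longrightarrow> mpp_step V E 1 g (solo_conf Y (snd c)) (solo_conf (insert x Y) (snd c)) w"
  shows "\<exists>w1 \<le> k * w. mpp_run V E 1 (k * r) g (merge_conf k c) (merge_conf k c') w1"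
proof -
  have "mpp_run V E 1 (k * r) g (merge_conf k c) (merge_conf k c') (card (v ` J) * w)"
    unfolding merge_conf_def red' \<open>snd c' = snd c\<close>
  proof (rule run_solo_add_red)
    show "finite (v ` J)" using \<open>J \<subseteq> {..<k}\<close> finite_subset[OF _ finite_lessThan] by blast
    show "finite (red_nodes k c \<union> v ` J)" using finite_red_nodes[OF fin', of k] red' by simp
    show "card (red_nodes k c \<union> v ` J) \<le> k * r"
      using valid_merge_conf[OF valid'] red' by (simp add: merge_conf_def valid_solo_conf_iff)
  qed (rule step)
  moreover have "card (v ` J) * w \<le> k * w"
    using card_image_lessThan_le[of J k v] \<open>J \<subseteq> {..<k}\<close> by simp
  ultimately show ?thesis by blast
qed

lemma mpp_step_merge:
  assumes step: "mpp_step V E k g c c' w"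
    and valid: "valid_conf k r c" and valid': "valid_conf k r c'" and fin': "finite_conf c'"
  shows "\<exists>w1 \<le> k * w. mpp_run V E 1 (k * r) g (merge_conf k c) (merge_conf k c') w1"
  using step
proof cases
  case (R1 J v R B)
  have "v ` J \<subseteq> red_nodes k c" and "finite (v ` J)"
    using R1 finite_subset[OF _ finite_lessThan] by (auto simp: red_nodes_def)
  moreover have "card (red_nodes k c) \<le> k * r"
    using valid_merge_conf[OF valid] by (simp add: merge_conf_def valid_solo_conf_iff)
  ultimately have "mpp_run V E 1 (k * r) g (merge_conf k c) (merge_conf k c') (card (v ` J) * g)"
    using R1 run_solo_store by (simp add: merge_conf_def red_nodes_def)
  moreover have "card (v ` J) * g \<le> k * g" using card_image_lessThan_le[of J k v] R1 by simp
  ultimately show ?thesis using R1 by auto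
next
  case (R2 J v B R)
  have red': "red_nodes k c' = red_nodes k c \<union> v ` J"
    using R2 by (auto simp: red_nodes_def split: if_splits)
  show ?thesis unfolding \<open>w = g\<close>
  proof (rule run_merge_add_red[where v = v and J = J])
    show "mpp_step V E 1 g (solo_conf Y (snd c)) (solo_conf (insert x Y) (snd c)) g"
      if "x \<in> v ` J" and "red_nodes k c \<subseteq> Y" for x Y
      using that R2 by (intro mpp_step_solo_load) auto
  qed (use R2 valid' fin' red' in simp_all)
next
  case (R3 J v R B)
  have red': "red_nodes k c' = red_nodes k c \<union> v ` J"
    using R3 by (auto simp: red_nodes_def split: if_splits)
  show ?thesis unfolding \<open>w = 1\<close>
  proof (rule run_merge_add_red[where v = v and J = J])
    show "mpp_step V E 1 g (solo_conf Y (snd c)) (solo_conf (insert x Y) (snd c)) 1"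
      if "x \<in> v ` J" and "red_nodes k c \<subseteq> Y" for x Y
      using that R3 by (intro mpp_step_solo_compute) (force simp: red_nodes_def)+
  qed (use R3 valid' fin' red' in simp_all)
next
  case (R4_red j x R B)
  have "merge_conf k c' = merge_conf k c \<or>
      mpp_step V E 1 g (merge_conf k c) (merge_conf k c') 0"
  proof (cases "x \<in> red_nodes k c'")
    case True
    then have "red_nodes k c' = red_nodes k c" using R4_red by (auto simp: red_nodes_def)
    then show ?thesis using R4_red by (simp add: merge_conf_def)
  next
    case False
    then have "red_nodes k c' = red_nodes k c - {x}" and "x \<in> red_nodes k c"
      using R4_red by (auto simp: red_nodes_def)
    then have "mpp_step V E 1 g (merge_conf k c) (merge_conf k c') 0"
      using mpp_step_solo_discard[of x "red_nodes k c" V E g B] R4_red by (simp add: merge_conf_def)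
    then show ?thesis ..
  qed
  then show ?thesis
    using R4_red run_nil[OF valid_merge_conf[OF valid]]
      mpp_run_single[OF valid_merge_conf[OF valid] _ valid_merge_conf[OF valid']]
    by (metis le0 mult_0_right)
next
  case (R4_blue x B R)
  have "mpp_step V E 1 g (merge_conf k c) (merge_conf k c') 0"
    using R4_blue mpp_step.R4_blue[of x B V E 1 g "fst (solo_conf (red_nodes k c) B)"]
    by (simp add: merge_conf_def solo_conf_def red_nodes_def)
  then show ?thesis
    using mpp_run_single valid_merge_conf[OF valid] valid_merge_conf[OF valid'] by blast
qed

lemma mpp_run_merge:
  "mpp_run V E k r g c c' w \<Longrightarrow> finite_conf c \<Longrightarrow>
   \<exists>w1 \<le> k * w. mpp_run V E 1 (k * r) g (merge_conf k c) (merge_conf k c') w1"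
proof (induction rule: mpp_run.induct)
  case (run_nil c)
  then show ?case using valid_merge_conf mpp_run.run_nil by blast
next
  case (run_step c c' w c'' w')
  have fin': "finite_conf c'" using mpp_step_finite_conf run_step by blast
  obtain w1 where "w1 \<le> k * w" "mpp_run V E 1 (k * r) g (merge_conf k c) (merge_conf k c') w1"
    using mpp_step_merge run_step.hyps(1,2) mpp_run_valid[OF run_step.hyps(3)] fin' by blast
  moreover obtain w2 where "w2 \<le> k * w'" "mpp_run V E 1 (k * r) g (merge_conf k c') (merge_conf k c'') w2"
    using run_step.IH fin' by blast
  ultimately show ?case by (intro exI[of _ "w1 + w2"]) (auto simp: algebra_simps intro: mpp_run_trans)
qed

lemma merge_init_conf: "merge_conf k init_conf = init_conf"
  by (auto simp: merge_conf_def solo_conf_def red_nodes_def init_conf_def fun_eq_iff)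

lemma terminal_merge_conf: "terminal_conf V E k c \<Longrightarrow> terminal_conf V E 1 (merge_conf k c)"
  by (auto simp: terminal_conf_def merge_conf_def solo_conf_def red_nodes_def)

theorem OPT_single_le:
  assumes "pebblable V E k r g"
  shows "pebblable V E 1 (k * r) g" and "OPT V E 1 (k * r) g \<le> k * OPT V E k r g"
proof -
  obtain c where run: "mpp_run V E k r g init_conf c (OPT V E k r g)" and terminal: "terminal_conf V E k c"
    using assms by (rule OPT_run)
  obtain w1 where cost: "w1 \<le> k * OPT V E k r g"
    and run1: "mpp_run V E 1 (k * r) g (merge_conf k init_conf) (merge_conf k c) w1"
    using mpp_run_merge[OF run] by (auto simp: finite_conf_def init_conf_def)
  note single = OPT_le_run[OF run1[unfolded merge_init_conf] terminal_merge_conf[OF terminal]]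
  show "pebblable V E 1 (k * r) g" by (rule single(1))
  show "OPT V E 1 (k * r) g \<le> k * OPT V E k r g" using single(2) cost by (rule order_trans)
qed

definition pebbled :: "'a conf \<Rightarrow> 'a set" where
  "pebbled c = snd c \<union> (\<Union>j. fst c j)"

lemma mpp_step_pebbled:
  "mpp_step V E k g c c' w \<Longrightarrow> \<exists>D. finite D \<and> card D \<le> k * w \<and> pebbled c' \<subseteq> pebbled c \<union> D"
proof (induction rule: mpp_step.induct)
  case (R3 J v R B)
  then have "finite (v ` J)" using finite_subset[OF _ finite_lessThan] by blast
  with R3 show ?case using card_image_lessThan_le[of J k v]
    by (intro exI[of _ "v ` J"]) (auto simp: pebbled_def split: if_splits)
qed (auto simp: pebbled_def split: if_splits intro!: exI[of _ "{}"])

lemma mpp_run_pebbled: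
  "mpp_run V E k r g c c' w \<Longrightarrow> \<exists>D. finite D \<and> card D \<le> k * w \<and> pebbled c' \<subseteq> pebbled c \<union> D"
proof (induction rule: mpp_run.induct)
  case (run_step c c' w c'' w')
  obtain D where D: "finite D" "card D \<le> k * w" "pebbled c' \<subseteq> pebbled c \<union> D"
    using mpp_step_pebbled[OF run_step.hyps(2)] by blast
  obtain D' where D': "finite D'" "card D' \<le> k * w'" "pebbled c'' \<subseteq> pebbled c' \<union> D'"
    using run_step.IH by blast
  have "card (D \<union> D') \<le> k * (w + w')"
    using card_Un_le[of D D'] D D' by (simp add: algebra_simps)
  with D D' show ?case by (intro exI[of _ "D \<union> D'"]) auto
qed (auto intro!: exI[of _ "{}"])

lemma card_sinks_le_run_cost:
  assumes "mpp_run V E k r g init_conf c w" and "terminal_conf V E k c"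
  shows "card {v. is_sink V E v} \<le> k * w"
proof -
  obtain D where D: "finite D" "card D \<le> k * w" "pebbled c \<subseteq> pebbled init_conf \<union> D"
    using mpp_run_pebbled[OF assms(1)] by blast
  have "{v. is_sink V E v} \<subseteq> D"
    using assms(2) D(3) by (force simp: terminal_conf_def pebbled_def init_conf_def)
  then show ?thesis using card_mono[OF D(1)] D(2) by (meson order_trans)
qed

lemma card_sinks_le_OPT: "pebblable V E k r g \<Longrightarrow> card {v. is_sink V E v} \<le> k * OPT V E k r g"
  by (metis OPT_run card_sinks_le_run_cost)

lemma dag_has_sink:
  assumes "dag V E" and "V \<noteq> {}"
  shows "\<exists>v. is_sink V E v"
proof -
  have "finite E" using assms(1) finite_subset[of E "V \<times> V"] by (auto simp: dag_def)
  then have "wf (E\<inverse>)" using assms(1) by (simp add: dag_def finite_acyclic_wf_converse)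
  then obtain z where "z \<in> V" "\<forall>y. (y, z) \<in> E\<inverse> \<longrightarrow> y \<notin> V"
    using assms(2) unfolding wf_eq_minimal by blast
  then have "is_sink V E z" using assms(1) by (auto simp: is_sink_def dag_def)
  then show ?thesis ..
qed

lemma OPT_pos:
  assumes "dag V E" and "V \<noteq> {}" and "pebblable V E k r g"
  shows "0 < OPT V E k r g"
proof -
  have "finite {v. is_sink V E v}"
    using assms(1) by (auto simp: dag_def is_sink_def intro: finite_subset)
  then have "0 < card {v. is_sink V E v}"
    using dag_has_sink[OF assms(1,2)] by (auto simp: card_gt_0_iff)
  then show ?thesis using card_sinks_le_OPT[OF assms(3)] by (auto intro: Nat.gr0I)
qed

lemma OPT_eq_sink_bound:
  assumes run: "mpp_run V E k r g init_conf c w" and terminal: "terminal_conf V E k c"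
    and sinks: "card {v. is_sink V E v} = k * w" and "0 < k"
  shows "pebblable V E k r g" and "OPT V E k r g = w"
proof -
  show peb: "pebblable V E k r g" by (rule OPT_le_run[OF run terminal])
  have "k * w \<le> k * OPT V E k r g" using card_sinks_le_OPT[OF peb] sinks by simp
  then show "OPT V E k r g = w" using OPT_le_run(2)[OF run terminal] \<open>0 < k\<close> by simp
qed

lemma sinks_edgeless: "{v. is_sink V {} v} = V"
  by (simp add: is_sink_def)

lemma OPT_edgeless_parallel:
  assumes "0 < k" and "0 < r"
  shows "pebblable {..<k} {} k r g" and "OPT {..<k} {} k r g = 1"
proof -
  define c :: "nat conf" where "c = (\<lambda>j. if j \<in> {..<k} then {j} else {}, {})"
  have "mpp_step {..<k} {} k g (\<lambda>_. {}, {}) c 1"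
    unfolding c_def by (rule R3) (use assms(1) in auto)
  then have run: "mpp_run {..<k} {} k r g init_conf c 1"
    using assms(2) by (intro mpp_run_single) (auto simp: valid_conf_def init_conf_def c_def)
  have "terminal_conf {..<k} {} k c" by (auto simp: terminal_conf_def c_def is_sink_def)
  from OPT_eq_sink_bound[OF run this _ assms(1)]
  show "pebblable {..<k} {} k r g" and "OPT {..<k} {} k r g = 1" by (simp_all add: sinks_edgeless)
qed

lemma OPT_edgeless_single:
  assumes "finite V" and "card V \<le> r"
  shows "pebblable V {} 1 r g" and "OPT V {} 1 r g = card V"
proof -
  have "solo_conf {} {} = init_conf"
    by (auto simp: solo_conf_def init_conf_def fun_eq_iff)
  moreover have "mpp_run V {} 1 r g (solo_conf {} {}) (solo_conf ({} \<union> V) {}) (card V * 1)"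
    using assms by (intro run_solo_add_red mpp_step_solo_compute) auto
  ultimately have run: "mpp_run V {} 1 r g init_conf (solo_conf V {}) (card V)"
    by (metis Un_empty_left mult_1_right)
  have "terminal_conf V {} 1 (solo_conf V {})"
    by (auto simp: terminal_conf_def solo_conf_def is_sink_def)
  from OPT_eq_sink_bound[OF run this]
  show "pebblable V {} 1 r g" and "OPT V {} 1 r g = card V" by (simp_all add: sinks_edgeless)
qed

theorem lemma8:
  fixes k g r0 :: nat
  assumes "k > 0" and "g > 0" and "r0 > 0" and "k dvd r0"
  shows "(\<forall>(V :: 'a set) E.
            dag V E \<and> V \<noteq> {} \<and> pebblable V E k (r0 div k) g \<and> pebblable V E 1 r0 g
            \<longrightarrow> real (OPT V E k (r0 div k) g) / real (OPT V E 1 r0 g) \<ge> 1 / real k)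
       \<and> (r0 div k \<ge> 2 \<longrightarrow>
            (\<exists>(V :: nat set) E.
               dag V E \<and> V \<noteq> {} \<and> pebblable V E k (r0 div k) g \<and> pebblable V E 1 r0 g
               \<and> real (OPT V E k (r0 div k) g) / real (OPT V E 1 r0 g) = 1 / real k))"
proof (intro conjI allI impI)
  have r0: "k * (r0 div k) = r0" using assms(4) by simp
  fix V :: "'a set" and E
  assume H: "dag V E \<and> V \<noteq> {} \<and> pebblable V E k (r0 div k) g \<and> pebblable V E 1 r0 g"
  then have "OPT V E 1 r0 g \<le> k * OPT V E k (r0 div k) g"
    using OPT_single_le(2)[of V E k "r0 div k" g] r0 by simp
  moreover have "0 < OPT V E 1 r0 g" using H by (intro OPT_pos) auto
  ultimately show "real (OPT V E k (r0 div k) g) / real (OPT V E 1 r0 g) \<ge> 1 / real k"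
    using assms(1) by (simp add: field_simps flip: of_nat_mult)
next
  assume "r0 div k \<ge> 2"
  then have "0 < r0 div k" and "k \<le> r0"
    using assms(4) by (auto elim!: dvdE)
  then show "\<exists>(V :: nat set) E.
      dag V E \<and> V \<noteq> {} \<and> pebblable V E k (r0 div k) g \<and> pebblable V E 1 r0 g
      \<and> real (OPT V E k (r0 div k) g) / real (OPT V E 1 r0 g) = 1 / real k"
    using OPT_edgeless_parallel[OF assms(1)] OPT_edgeless_single[of "{..<k}" r0 g] assms(1)
    by (intro exI[of _ "{..<k}"] exI[of _ "{}"]) (auto simp: dag_def acyclic_def)
qed

end
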